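(* If $D$ is a quaternary near-extremal Hermitian self-dual code of length $24$ and $\alpha$ denotes the number of codewords of weight $8$ in $D$, then $\alpha=9\beta$ for some integer $\beta$ with $1\le\beta\le 253$.
   Context: Let $\mathbb{F}_4=\{0,1,\omega,\omega^2\}$ with $\omega^2=\omega+1$. A quaternary code of length $n$ is a linear subspace of $\mathbb{F}_4^n$; it is Hermitian self-dual if it equals its dual with respect to $\langle x,y\rangle_H=\sum_k x_k y_k^2$. The weight of a vector is the number of nonzero coordinates. A quaternary Hermitian self-dual code of length $24$ is near-extremal if its minimum nonzero weight is $8$. *)

theory Defs
  imports Main
begin

text \<open>The field F4 = {0,1,w,w^2} with w^2 = w + 1, given by explicit operation tables.\<close>

datatype f4 = F0 | F1 | Fw | Fw2

fun f4_add :: "f4 \<Rightarrow> f4 \<Rightarrow> f4" where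
  "f4_add F0 y = y"
| "f4_add x F0 = x"
| "f4_add F1 F1 = F0"
| "f4_add F1 Fw = Fw2"
| "f4_add F1 Fw2 = Fw"
| "f4_add Fw F1 = Fw2"
| "f4_add Fw Fw = F0"
| "f4_add Fw Fw2 = F1"
| "f4_add Fw2 F1 = Fw"
| "f4_add Fw2 Fw = F1"
| "f4_add Fw2 Fw2 = F0"

fun f4_mul :: "f4 \<Rightarrow> f4 \<Rightarrow> f4" where
  "f4_mul F0 y = F0"
| "f4_mul x F0 = F0"
| "f4_mul F1 y = y"
| "f4_mul x F1 = x"
| "f4_mul Fw Fw = Fw2"
| "f4_mul Fw Fw2 = F1"
| "f4_mul Fw2 Fw = F1"
| "f4_mul Fw2 Fw2 = Fw"

definition f4_vecs :: "nat \<Rightarrow> (nat \<Rightarrow> f4) set" where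
  "f4_vecs n = {x. \<forall>i\<ge>n. x i = F0}"

definition vzero :: "nat \<Rightarrow> f4" where
  "vzero = (\<lambda>i. F0)"

definition vadd :: "(nat \<Rightarrow> f4) \<Rightarrow> (nat \<Rightarrow> f4) \<Rightarrow> (nat \<Rightarrow> f4)" where
  "vadd x y = (\<lambda>i. f4_add (x i) (y i))"

definition vsmult :: "f4 \<Rightarrow> (nat \<Rightarrow> f4) \<Rightarrow> (nat \<Rightarrow> f4)" where
  "vsmult a x = (\<lambda>i. f4_mul a (x i))"

definition quaternary_code :: "nat \<Rightarrow> (nat \<Rightarrow> f4) set \<Rightarrow> bool" where
  "quaternary_code n C \<longleftrightarrow> C \<subseteq> f4_vecs n \<and> vzero \<in> C \<and>
     (\<forall>x\<in>C. \<forall>y\<in>C. vadd x y \<in> C) \<and> (\<forall>a. \<forall>x\<in>C. vsmult a x \<in> C)"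

definition herm_ip :: "nat \<Rightarrow> (nat \<Rightarrow> f4) \<Rightarrow> (nat \<Rightarrow> f4) \<Rightarrow> f4" where
  "herm_ip n x y = foldr (\<lambda>k acc. f4_add (f4_mul (x k) (f4_mul (y k) (y k))) acc) [0..<n] F0"

definition herm_dual :: "nat \<Rightarrow> (nat \<Rightarrow> f4) set \<Rightarrow> (nat \<Rightarrow> f4) set" where
  "herm_dual n C = {y \<in> f4_vecs n. \<forall>x\<in>C. herm_ip n x y = F0}"

definition herm_self_dual :: "nat \<Rightarrow> (nat \<Rightarrow> f4) set \<Rightarrow> bool" where
  "herm_self_dual n C \<longleftrightarrow> quaternary_code n C \<and> C = herm_dual n C"

definition wt :: "nat \<Rightarrow> (nat \<Rightarrow> f4) \<Rightarrow> nat" where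
  "wt n x = card {i. i < n \<and> x i \<noteq> F0}"

definition min_weight :: "nat \<Rightarrow> (nat \<Rightarrow> f4) set \<Rightarrow> nat \<Rightarrow> bool" where
  "min_weight n C d \<longleftrightarrow> (\<exists>x\<in>C. x \<noteq> vzero \<and> wt n x = d) \<and>
     (\<forall>x\<in>C. x \<noteq> vzero \<longrightarrow> d \<le> wt n x)"

definition near_extremal_24 :: "(nat \<Rightarrow> f4) set \<Rightarrow> bool" where
  "near_extremal_24 D \<longleftrightarrow> herm_self_dual 24 D \<and> min_weight 24 D 8"

end

theory Submission
  imports Defs "HOL-Library.FuncSet"
begin

text \<open>
  Let \<open>D\<close> be Hermitian self-dual of length \<open>n\<close>. For a set \<open>S\<close> of coordinates, the projection of
  \<open>D\<close> onto \<open>S\<close> has as kernel the words vanishing on \<open>S\<close>, and the orthogonal complement of its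
  image in \<open>F4^S\<close> consists of the words of \<open>D\<close> supported in \<open>S\<close>. Hence
  \<open>4^|S| * #{x \<in> D vanishing on S} = |D| * #{y \<in> D supported in S}\<close>.
  Summing over all \<open>k\<close>-sets \<open>S\<close>, and over all \<open>k\<close>-sets containing coordinate 0, gives binomial
  moment identities for the weight distribution \<open>A_w\<close> of \<open>D\<close> and for the numbers \<open>B_w\<close>,
  \<open>C_w\<close> of weight-\<open>w\<close> words with zero, resp. nonzero, coordinate 0.

  For a near-extremal code of length 24 every nonzero weight is even and at least 8, so for
  \<open>k \<le> 7\<close> (\<open>k \<le> 8\<close> for sets containing 0) the right-hand sides only involve the zero word and,
  at \<open>k = 8\<close>, the words counted by \<open>C_8\<close>.
  The resulting linear equations force \<open>B_8 = 2 C_8\<close> and \<open>A_10 + 8 A_8 = 18216\<close>. Scaling by the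
  three units of \<open>F4\<close> gives \<open>C_8 = 3 \<beta>\<close>, where \<open>\<beta>\<close> counts the weight-8 words with
  coordinate 0 equal to 1; so \<open>A_8 = 9 \<beta>\<close> and \<open>\<beta> \<le> 18216 / 72 = 253\<close>.
\<close>

section \<open>The field with four elements\<close>

lemma all_f4: "(\<forall>x::f4. P x) \<longleftrightarrow> P F0 \<and> P F1 \<and> P Fw \<and> P Fw2"
  by (metis f4.exhaust)

instantiation f4 :: field
begin
\<comment> \<open>Negation is the identity in characteristic 2, and \<open>a^3 = 1\<close> for \<open>a \<noteq> 0\<close>, so \<open>inverse a = a^2\<close>.\<close>
definition zero_f4 where "0 = F0"
definition one_f4 where "1 = F1"
definition plus_f4 where "a + b = f4_add a b"
definition times_f4 where "a * b = f4_mul a b"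
definition uminus_f4 where "- (a::f4) = a"
definition minus_f4 where "a - b = f4_add a b"
definition inverse_f4 where "inverse a = f4_mul a a"
definition divide_f4 where "a div b = f4_mul a (f4_mul b b)"
instance
  apply (standard; ((unfold zero_f4_def one_f4_def plus_f4_def times_f4_def uminus_f4_def
        minus_f4_def inverse_f4_def divide_f4_def, atomize (full), simp add: all_f4)?))
   apply (simp_all add: zero_f4_def one_f4_def inverse_f4_def)
  done
end

lemma UNIV_f4: "(UNIV :: f4 set) = {F0, F1, Fw, Fw2}"
  using f4.exhaust by auto

instance f4 :: finite
  by standard (simp add: UNIV_f4)

lemma card_UNIV_f4: "card (UNIV :: f4 set) = 4"
  by (simp add: UNIV_f4)

lemmas f4_defs = zero_f4_def one_f4_def plus_f4_def times_f4_def

lemma f4_add_self [simp]: "(a::f4) + a = 0"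
  by (cases a) (simp_all add: f4_defs)

lemma f4_add_eq_0_iff: "(a::f4) + b = 0 \<longleftrightarrow> a = b"
  by (cases a; cases b) (simp_all add: f4_defs)

lemma f4_square_add: "((a::f4) + b) * (a + b) = a * a + b * b"
  by (cases a; cases b) (simp_all add: f4_defs)

lemma f4_cube: "(a::f4) * (a * a) = (if a = 0 then 0 else 1)"
  by (cases a) (simp_all add: f4_defs)

lemma f4_ex_square_root: "\<exists>t::f4. t * t = v"
  by (cases v) (simp_all add: f4_defs exI[of _ F0] exI[of _ F1] exI[of _ Fw] exI[of _ Fw2])

lemma f4_nonzero_eq: "{c::f4. c \<noteq> 0} = {1, Fw, Fw2}"
  by (simp add: set_eq_iff all_f4 f4_defs)

lemma card_f4_nonzero: "card {c::f4. c \<noteq> 0} = 3"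
  unfolding f4_nonzero_eq by (simp add: f4_defs)

lemma f4_add_eq [simp]: "f4_add a b = a + b"
  by (simp add: plus_f4_def)

lemma f4_mul_eq [simp]: "f4_mul a b = a * b"
  by (simp add: times_f4_def)

lemma F0_eq [simp]: "F0 = 0"
  by (simp add: zero_f4_def)

lemma of_nat_f4: "(of_nat n :: f4) = (if even n then 0 else 1)"
  by (induction n) simp_all

section \<open>Vectors and the Hermitian form\<close>

lemma vadd_apply [simp]: "vadd x y j = x j + y j"
  by (simp add: vadd_def)

lemma vsmult_apply [simp]: "vsmult a x j = a * x j"
  by (simp add: vsmult_def)

lemma vzero_apply [simp]: "vzero j = 0"
  by (simp add: vzero_def)

definition vecs_on :: "nat set \<Rightarrow> (nat \<Rightarrow> f4) set" where
  "vecs_on J = {x. \<forall>j. j \<notin> J \<longrightarrow> x j = 0}"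

definition hform :: "nat set \<Rightarrow> (nat \<Rightarrow> f4) \<Rightarrow> (nat \<Rightarrow> f4) \<Rightarrow> f4" where
  "hform J x y = (\<Sum>j\<in>J. x j * (y j * y j))"

definition orth :: "nat set \<Rightarrow> (nat \<Rightarrow> f4) set \<Rightarrow> (nat \<Rightarrow> f4) set" where
  "orth J W = {y \<in> vecs_on J. \<forall>x\<in>W. hform J x y = 0}"

definition f4_subspace :: "(nat \<Rightarrow> f4) set \<Rightarrow> bool" where
  "f4_subspace W \<longleftrightarrow> vzero \<in> W \<and> (\<forall>x\<in>W. \<forall>y\<in>W. vadd x y \<in> W) \<and> (\<forall>a. \<forall>x\<in>W. vsmult a x \<in> W)"

lemma herm_ip_eq_hform: "herm_ip n x y = hform {0..<n} x y"
proof -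
  have "foldr (\<lambda>k acc. f k + acc) ks (0::f4) = sum_list (map f ks)" for f ks
    by (induction ks) simp_all
  then show ?thesis
    unfolding herm_ip_def hform_def f4_add_eq f4_mul_eq F0_eq
    by (metis set_upt sum_set_upt_conv_sum_list_nat)
qed

lemma f4_vecs_eq_vecs_on: "f4_vecs n = vecs_on {0..<n}"
  by (auto simp: f4_vecs_def vecs_on_def)

lemma herm_self_dualD:
  assumes "herm_self_dual n C"
  shows "C \<subseteq> vecs_on {0..<n}" "f4_subspace C" "orth {0..<n} C = C"
proof -
  have "quaternary_code n C \<longleftrightarrow> C \<subseteq> vecs_on {0..<n} \<and> f4_subspace C"
    by (simp add: quaternary_code_def f4_subspace_def f4_vecs_eq_vecs_on)
  moreover have "herm_dual n C = orth {0..<n} C"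
    by (simp add: herm_dual_def orth_def f4_vecs_eq_vecs_on herm_ip_eq_hform)
  ultimately show "C \<subseteq> vecs_on {0..<n}" "f4_subspace C" "orth {0..<n} C = C"
    using assms by (simp_all add: herm_self_dual_def)
qed

lemma vecs_on_vadd: "x \<in> vecs_on J \<Longrightarrow> y \<in> vecs_on J \<Longrightarrow> vadd x y \<in> vecs_on J"
  by (simp add: vecs_on_def)

lemma bij_betw_restrict_vecs_on: "bij_betw (\<lambda>x. restrict x J) (vecs_on J) (J \<rightarrow>\<^sub>E UNIV)"
proof (rule bij_betwI[where g = "\<lambda>f j. if j \<in> J then f j else 0"])
  show "(\<lambda>x. restrict x J) \<in> vecs_on J \<rightarrow> J \<rightarrow>\<^sub>E UNIV" by simp
  show "(\<lambda>f j. if j \<in> J then f j else 0) \<in> (J \<rightarrow>\<^sub>E UNIV) \<rightarrow> vecs_on J"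
    by (simp add: vecs_on_def)
  show "(\<lambda>j. if j \<in> J then restrict x J j else 0) = x" if "x \<in> vecs_on J" for x
    using that by (simp add: vecs_on_def fun_eq_iff)
  show "restrict (\<lambda>j. if j \<in> J then y j else 0) J = y" if "y \<in> J \<rightarrow>\<^sub>E UNIV" for y
    using that PiE_arb[OF that] by (simp add: restrict_def fun_eq_iff)
qed

lemma finite_vecs_on: "finite J \<Longrightarrow> finite (vecs_on J)"
  using bij_betw_finite[OF bij_betw_restrict_vecs_on] by (simp add: finite_PiE)

lemma card_vecs_on: "finite J \<Longrightarrow> card (vecs_on J) = 4 ^ card J"
  by (simp add: bij_betw_same_card[OF bij_betw_restrict_vecs_on] card_PiE card_UNIV_f4)

lemma hform_vadd_right: "hform J x (vadd y z) = hform J x y + hform J x z"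
  unfolding hform_def vadd_apply f4_square_add by (simp add: distrib_left sum.distrib)

lemma hform_vadd_left: "hform J (vadd x y) z = hform J x z + hform J y z"
  by (simp add: hform_def distrib_right sum.distrib)

lemma hform_vsmult_left: "hform J (vsmult a x) y = a * hform J x y"
  by (simp add: hform_def sum_distrib_left mult.assoc)

lemma hform_vzero_left [simp]: "hform J vzero y = 0"
  by (simp add: hform_def)

lemma hform_self: "finite J \<Longrightarrow> hform J x x = of_nat (card {j\<in>J. x j \<noteq> 0})"
  by (simp add: hform_def f4_cube sum.If_cases Int_def)

\<comment> \<open>The hypothesis \<open>fibre\<close> says that the fibres of \<open>f\<close> are the translates of the fibre over \<open>z\<close>.\<close>
lemma card_eq_card_image_mult_card_fibre:
  assumes "finite G"
    and add_closed: "\<And>x y. x \<in> G \<Longrightarrow> y \<in> G \<Longrightarrow> vadd x y \<in> G"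
    and fibre: "\<And>x y. x \<in> G \<Longrightarrow> y \<in> G \<Longrightarrow> f (vadd x y) = z \<longleftrightarrow> f x = f y"
  shows "card G = card (f ` G) * card {x\<in>G. f x = z}"
proof -
  have translate: "card {x\<in>G. f x = f a} = card {x\<in>G. f x = z}" if "a \<in> G" for a
  proof -
    have cancel: "vadd (vadd x a) a = x" for x
      by (simp add: fun_eq_iff add.assoc)
    have "f (vadd x a) = f a \<longleftrightarrow> f x = z" if "x \<in> G" for x
      using fibre[OF add_closed[OF that \<open>a \<in> G\<close>] \<open>a \<in> G\<close>] by (simp add: cancel)
    then have "bij_betw (\<lambda>x. vadd x a) {x\<in>G. f x = z} {x\<in>G. f x = f a}"
      using \<open>a \<in> G\<close> add_closed fibre by (intro bij_betwI[where g = "\<lambda>x. vadd x a"]) (auto simp: cancel)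
    then show ?thesis
      by (simp add: bij_betw_same_card)
  qed
  have "card G = (\<Sum>w\<in>f ` G. card {x\<in>G. f x = w})"
    using \<open>finite G\<close> by (subst card_UN_disjoint[symmetric]) (auto intro: arg_cong[where f = card])
  also have "\<dots> = (\<Sum>w\<in>f ` G. card {x\<in>G. f x = z})"
    using translate by (intro sum.cong) auto
  finally show ?thesis
    by simp
qed

lemma sum_card_swap:
  assumes "finite A" "finite B"
  shows "(\<Sum>x\<in>A. card {y\<in>B. R x y}) = (\<Sum>y\<in>B. card {x\<in>A. R x y})"
proof -
  have count: "card {y\<in>C. P y} = (\<Sum>y\<in>C. if P y then 1 else 0)" if "finite C"
    for C and P :: "'c \<Rightarrow> bool"
    using that by (simp add: sum.If_cases Int_def)
  have "(\<Sum>x\<in>A. card {y\<in>B. R x y}) = (\<Sum>x\<in>A. \<Sum>y\<in>B. if R x y then 1 else 0)"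
    using count[OF assms(2)] by simp
  also have "\<dots> = (\<Sum>y\<in>B. \<Sum>x\<in>A. if R x y then 1 else 0)"
    by (rule sum.swap)
  also have "\<dots> = (\<Sum>y\<in>B. card {x\<in>A. R x y})"
    using count[OF assms(1)] by simp
  finally show ?thesis .
qed

lemma card_supersets:
  assumes "finite B"
  shows "card {S. A \<subseteq> S \<and> S \<subseteq> B \<and> card S = k} =
    (if A \<subseteq> B \<and> card A \<le> k then (card B - card A) choose (k - card A) else 0)"
proof (cases "A \<subseteq> B \<and> card A \<le> k")
  case True
  then have "finite A"
    using \<open>finite B\<close> finite_subset by blast
  have "bij_betw (\<lambda>S. S - A) {S. A \<subseteq> S \<and> S \<subseteq> B \<and> card S = k}
      {T. T \<subseteq> B - A \<and> card T = k - card A}"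
  proof (rule bij_betwI[where g = "\<lambda>T. T \<union> A"])
    show "(\<lambda>S. S - A) \<in> {S. A \<subseteq> S \<and> S \<subseteq> B \<and> card S = k} \<rightarrow> {T. T \<subseteq> B - A \<and> card T = k - card A}"
      using \<open>finite A\<close> \<open>finite B\<close> by (auto simp: card_Diff_subset dest: finite_subset)
    show "(\<lambda>T. T \<union> A) \<in> {T. T \<subseteq> B - A \<and> card T = k - card A} \<rightarrow> {S. A \<subseteq> S \<and> S \<subseteq> B \<and> card S = k}"
    proof
      fix T assume T: "T \<in> {T. T \<subseteq> B - A \<and> card T = k - card A}"
      then have "card (T \<union> A) = card T + card A"
        using \<open>finite A\<close> \<open>finite B\<close> by (intro card_Un_disjoint) (auto dest: finite_subset)
      then show "T \<union> A \<in> {S. A \<subseteq> S \<and> S \<subseteq> B \<and> card S = k}"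
        using T True by auto
    qed
  qed auto
  then have "card {S. A \<subseteq> S \<and> S \<subseteq> B \<and> card S = k} = card (B - A) choose (k - card A)"
    using \<open>finite B\<close> by (simp add: bij_betw_same_card n_subsets)
  then show ?thesis
    using True \<open>finite A\<close> by (simp add: card_Diff_subset)
next
  case False
  have "card A \<le> card S" if "A \<subseteq> S" "S \<subseteq> B" for S
    using that \<open>finite B\<close> by (intro card_mono) (auto dest: finite_subset)
  then have "{S. A \<subseteq> S \<and> S \<subseteq> B \<and> card S = k} = {}"
    using False by auto
  then show ?thesis
    using False by (simp only: if_False card.empty)
qed

\<comment> \<open>Oriented so that \<open>simp\<close> evaluates binomial coefficients of numerals.\<close>
lemma binomial_eq_div: "0 < n \<Longrightarrow> 0 < k \<Longrightarrow> n choose k = n * ((n - 1) choose (k - 1)) div k"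
  using times_binomial_minus1_eq[of k n] by (metis nonzero_mult_div_cancel_left not_gr0)

section \<open>Orthogonal complements\<close>

lemma card_eq_4_mult_card_kernel:
  fixes f :: "(nat \<Rightarrow> f4) \<Rightarrow> f4"
  assumes "finite G"
    and "\<And>x y. x \<in> G \<Longrightarrow> y \<in> G \<Longrightarrow> vadd x y \<in> G"
    and "\<And>x y. x \<in> G \<Longrightarrow> y \<in> G \<Longrightarrow> f (vadd x y) = f x + f y"
    and "f ` G = UNIV"
  shows "card G = 4 * card {x\<in>G. f x = 0}"
  using card_eq_card_image_mult_card_fibre[of G f 0] assms
  by (simp add: f4_add_eq_0_iff card_UNIV_f4)

lemma hform_image_right:
  assumes "finite J" "x \<in> vecs_on J" "x \<noteq> vzero"
  shows "hform J x ` vecs_on J = UNIV"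
proof -
  obtain j where "x j \<noteq> 0"
    using \<open>x \<noteq> vzero\<close> by (auto simp: fun_eq_iff)
  then have "j \<in> J"
    using \<open>x \<in> vecs_on J\<close> by (auto simp: vecs_on_def)
  have "v \<in> hform J x ` vecs_on J" for v
  proof -
    obtain t where t: "t * t = v / x j"
      using f4_ex_square_root by blast
    define y where "y = (\<lambda>k. if k = j then t else 0)"
    have "hform J x y = (\<Sum>k\<in>J. if k = j then x j * (t * t) else 0)"
      unfolding hform_def by (rule sum.cong) (auto simp: y_def)
    also have "\<dots> = x j * (t * t)"
      using \<open>finite J\<close> \<open>j \<in> J\<close> by simp
    also have "\<dots> = v"
      using t \<open>x j \<noteq> 0\<close> by simp
    finally show ?thesis
      using \<open>j \<in> J\<close> by (intro image_eqI[of _ _ y]) (auto simp: y_def vecs_on_def)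
  qed
  then show ?thesis
    by blast
qed

lemma hform_image_left:
  assumes "f4_subspace W" "x0 \<in> W" "hform J x0 y \<noteq> 0"
  shows "(\<lambda>x. hform J x y) ` W = UNIV"
proof -
  have "v \<in> (\<lambda>x. hform J x y) ` W" for v
  proof (rule image_eqI)
    show "v = hform J (vsmult (v / hform J x0 y) x0) y"
      using \<open>hform J x0 y \<noteq> 0\<close> by (simp add: hform_vsmult_left)
    show "vsmult (v / hform J x0 y) x0 \<in> W"
      using assms by (simp add: f4_subspace_def)
  qed
  then show ?thesis
    by blast
qed

\<comment> \<open>Double counting of the pairs \<open>(x, y)\<close> with \<open>hform J x y = 0\<close>: an additive map onto \<open>F4\<close>
  vanishes on exactly a quarter of its domain.\<close>
lemma sum_card_hform_eq_0_right:
  assumes "finite J" "W \<subseteq> vecs_on J" "f4_subspace W"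
  shows "4 * (\<Sum>x\<in>W. card {y\<in>vecs_on J. hform J x y = 0}) = (card W + 3) * card (vecs_on J)"
proof -
  let ?V = "vecs_on J"
  have "finite ?V"
    using \<open>finite J\<close> by (rule finite_vecs_on)
  then have "finite W"
    using \<open>W \<subseteq> ?V\<close> by (rule finite_subset[rotated])
  have "vzero \<in> W"
    using \<open>f4_subspace W\<close> by (simp add: f4_subspace_def)
  have "4 * card {y\<in>?V. hform J x y = 0} = card ?V" if "x \<in> W - {vzero}" for x
    using that assms \<open>finite ?V\<close>
    by (intro card_eq_4_mult_card_kernel[symmetric] vecs_on_vadd hform_vadd_right hform_image_right) auto
  then have "4 * (\<Sum>x\<in>W - {vzero}. card {y\<in>?V. hform J x y = 0}) = card (W - {vzero}) * card ?V"
    by (simp add: sum_distrib_left)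
  moreover have "(\<Sum>x\<in>W. card {y\<in>?V. hform J x y = 0})
      = card ?V + (\<Sum>x\<in>W - {vzero}. card {y\<in>?V. hform J x y = 0})"
    using sum.remove[OF \<open>finite W\<close> \<open>vzero \<in> W\<close>, of "\<lambda>x. card {y\<in>?V. hform J x y = 0}"] by simp
  moreover have "card W = Suc (card (W - {vzero}))"
    using card.remove[OF \<open>finite W\<close> \<open>vzero \<in> W\<close>] .
  ultimately show ?thesis
    by (simp add: algebra_simps)
qed

lemma sum_card_hform_eq_0_left:
  assumes "finite J" "W \<subseteq> vecs_on J" "f4_subspace W"
  shows "4 * (\<Sum>y\<in>vecs_on J. card {x\<in>W. hform J x y = 0})
       = (card (vecs_on J) + 3 * card (orth J W)) * card W"
proof -
  let ?V = "vecs_on J" and ?P = "orth J W"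
  have "finite ?V"
    using \<open>finite J\<close> by (rule finite_vecs_on)
  then have "finite W"
    using \<open>W \<subseteq> ?V\<close> by (rule finite_subset[rotated])
  have "?P \<subseteq> ?V"
    by (auto simp: orth_def)
  have "4 * card {x\<in>W. hform J x y = 0} = card W" if "y \<in> ?V - ?P" for y
  proof -
    obtain x0 where "x0 \<in> W" "hform J x0 y \<noteq> 0"
      using \<open>y \<in> ?V - ?P\<close> unfolding orth_def by blast
    then show ?thesis
      using \<open>finite W\<close> \<open>f4_subspace W\<close>
      by (intro card_eq_4_mult_card_kernel[symmetric] hform_vadd_left hform_image_left)
        (auto simp: f4_subspace_def)
  qed
  then have "4 * (\<Sum>y\<in>?V - ?P. card {x\<in>W. hform J x y = 0}) = card (?V - ?P) * card W"
    by (simp add: sum_distrib_left)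
  moreover have "(\<Sum>y\<in>?P. card {x\<in>W. hform J x y = 0}) = card ?P * card W"
  proof -
    have "{x\<in>W. hform J x y = 0} = W" if "y \<in> ?P" for y
      using that by (auto simp: orth_def)
    then show ?thesis
      by simp
  qed
  moreover have "(\<Sum>y\<in>?V. card {x\<in>W. hform J x y = 0})
      = (\<Sum>y\<in>?P. card {x\<in>W. hform J x y = 0}) + (\<Sum>y\<in>?V - ?P. card {x\<in>W. hform J x y = 0})"
    using sum.subset_diff[OF \<open>?P \<subseteq> ?V\<close> \<open>finite ?V\<close>] by (simp add: add.commute)
  moreover have "card ?V = card (?V - ?P) + card ?P"
    using card_Diff_subset[OF finite_subset[OF \<open>?P \<subseteq> ?V\<close> \<open>finite ?V\<close>] \<open>?P \<subseteq> ?V\<close>]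
      card_mono[OF \<open>finite ?V\<close> \<open>?P \<subseteq> ?V\<close>]
    by simp
  ultimately show ?thesis
    by (simp add: algebra_simps)
qed

lemma card_mult_card_orth:
  assumes "finite J" "W \<subseteq> vecs_on J" "f4_subspace W"
  shows "card W * card (orth J W) = 4 ^ card J"
proof -
  have "finite (vecs_on J)"
    using \<open>finite J\<close> by (rule finite_vecs_on)
  then have "finite W"
    using \<open>W \<subseteq> vecs_on J\<close> by (rule finite_subset[rotated])
  have "(card W + 3) * card (vecs_on J) = 4 * (\<Sum>x\<in>W. card {y\<in>vecs_on J. hform J x y = 0})"
    by (rule sum_card_hform_eq_0_right[OF assms, symmetric])
  also have "\<dots> = 4 * (\<Sum>y\<in>vecs_on J. card {x\<in>W. hform J x y = 0})"
    by (simp only: sum_card_swap[OF \<open>finite W\<close> \<open>finite (vecs_on J)\<close>])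
  also have "\<dots> = (card (vecs_on J) + 3 * card (orth J W)) * card W"
    by (rule sum_card_hform_eq_0_left[OF assms])
  finally have "card W * card (orth J W) = card (vecs_on J)"
    by (simp add: algebra_simps)
  then show ?thesis
    using card_vecs_on[OF \<open>finite J\<close>] by simp
qed

section \<open>Shortened subcodes of a self-dual code\<close>

definition proj :: "nat set \<Rightarrow> (nat \<Rightarrow> f4) \<Rightarrow> nat \<Rightarrow> f4" where
  "proj S x = (\<lambda>j. if j \<in> S then x j else 0)"

lemma f4_subspace_image_proj: "f4_subspace C \<Longrightarrow> f4_subspace (proj S ` C)"
  unfolding f4_subspace_def
proof (elim conjE, intro conjI ballI allI)
  assume "vzero \<in> C" "\<forall>x\<in>C. \<forall>y\<in>C. vadd x y \<in> C" "\<forall>a. \<forall>x\<in>C. vsmult a x \<in> C"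
  show "vzero \<in> proj S ` C"
    using \<open>vzero \<in> C\<close> by (intro image_eqI[of _ _ vzero]) (auto simp: proj_def fun_eq_iff)
  show "vadd x y \<in> proj S ` C" if "x \<in> proj S ` C" "y \<in> proj S ` C" for x y
    using that \<open>\<forall>x\<in>C. \<forall>y\<in>C. vadd x y \<in> C\<close>
    by (auto simp: proj_def fun_eq_iff intro!: image_eqI[of _ _ "vadd _ _"])
  show "vsmult a x \<in> proj S ` C" if "x \<in> proj S ` C" for a x
    using that \<open>\<forall>a. \<forall>x\<in>C. vsmult a x \<in> C\<close>
    by (auto simp: proj_def fun_eq_iff intro!: image_eqI[of _ _ "vsmult _ _"])
qed

lemma orth_image_proj:
  assumes "herm_self_dual n C" "S \<subseteq> {0..<n}"
  shows "orth S (proj S ` C) = C \<inter> vecs_on S"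
proof -
  have hform_proj: "hform S (proj S x) y = hform {0..<n} x y" if "y \<in> vecs_on S" for x y
  proof -
    have "hform S (proj S x) y = (\<Sum>j\<in>S. x j * (y j * y j))"
      by (simp add: hform_def proj_def)
    also have "\<dots> = hform {0..<n} x y"
      unfolding hform_def using \<open>S \<subseteq> {0..<n}\<close> that
      by (intro sum.mono_neutral_left) (auto simp: vecs_on_def)
    finally show ?thesis .
  qed
  have "vecs_on S \<subseteq> vecs_on {0..<n}"
    using \<open>S \<subseteq> {0..<n}\<close> by (auto simp: vecs_on_def)
  then have "orth S (proj S ` C) = vecs_on S \<inter> orth {0..<n} C"
    by (auto simp: orth_def hform_proj)
  then show ?thesis
    using herm_self_dualD(3)[OF assms(1)] by auto
qed

lemma card_eq_card_image_proj_mult: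
  assumes "finite C" "f4_subspace C"
  shows "card C = card (proj S ` C) * card {x\<in>C. \<forall>j\<in>S. x j = 0}"
proof -
  have "card C = card (proj S ` C) * card {x\<in>C. proj S x = vzero}"
    using assms by (intro card_eq_card_image_mult_card_fibre)
      (auto simp: f4_subspace_def proj_def fun_eq_iff f4_add_eq_0_iff)
  moreover have "{x\<in>C. proj S x = vzero} = {x\<in>C. \<forall>j\<in>S. x j = 0}"
    by (auto simp: proj_def fun_eq_iff)
  ultimately show ?thesis
    by simp
qed

lemma finite_herm_self_dual: "herm_self_dual n C \<Longrightarrow> finite C"
  by (rule finite_subset[OF herm_self_dualD(1)]) (simp_all add: finite_vecs_on)

lemma card_vanishing_on_herm_self_dual:
  assumes "herm_self_dual n C" "S \<subseteq> {0..<n}"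
  shows "4 ^ card S * card {x\<in>C. \<forall>j\<in>S. x j = 0} = card C * card (C \<inter> vecs_on S)"
proof -
  have "finite S"
    using \<open>S \<subseteq> {0..<n}\<close> finite_subset by blast
  have "f4_subspace C"
    using \<open>herm_self_dual n C\<close> by (rule herm_self_dualD)
  have "proj S ` C \<subseteq> vecs_on S"
    by (auto simp: proj_def vecs_on_def)
  then have "card (proj S ` C) * card (orth S (proj S ` C)) = 4 ^ card S"
    using \<open>finite S\<close> \<open>f4_subspace C\<close> by (intro card_mult_card_orth f4_subspace_image_proj)
  then have "4 ^ card S = card (proj S ` C) * card (C \<inter> vecs_on S)"
    using orth_image_proj[OF assms] by simp
  then show ?thesis
    using card_eq_card_image_proj_mult[OF finite_herm_self_dual[OF \<open>herm_self_dual n C\<close>]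
        \<open>f4_subspace C\<close>, of S]
    by (simp add: algebra_simps)
qed

lemma card_herm_self_dual:
  assumes "herm_self_dual n C"
  shows "card C = 2 ^ n"
proof -
  have "C \<subseteq> vecs_on {0..<n}" "vzero \<in> C"
    using herm_self_dualD(1,2)[OF assms] by (auto simp: f4_subspace_def)
  have "x = vzero" if "x \<in> C" "\<forall>j\<in>{0..<n}. x j = 0" for x
  proof
    fix j
    show "x j = vzero j"
      using that \<open>C \<subseteq> vecs_on {0..<n}\<close> by (cases "j < n") (auto simp: vecs_on_def)
  qed
  then have "{x\<in>C. \<forall>j\<in>{0..<n}. x j = 0} = {vzero}" "C \<inter> vecs_on {0..<n} = C"
    using \<open>C \<subseteq> vecs_on {0..<n}\<close> \<open>vzero \<in> C\<close> by auto
  then have "card C ^ 2 = (2 ^ n) ^ 2"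
    using card_vanishing_on_herm_self_dual[OF assms, of "{0..<n}"]
    by (simp add: power2_eq_square power_mult_distrib[symmetric] power_mult[symmetric])
  then show ?thesis
    by (rule power_eq_imp_eq_base) simp_all
qed

section \<open>Weight distributions\<close>

lemma wt_le_length: "wt n x \<le> n"
  unfolding wt_def by (rule order.trans[OF card_mono[of "{0..<n}"]]) auto

lemma wt_vsmult: "c \<noteq> 0 \<Longrightarrow> wt n (vsmult c x) = wt n x"
  by (simp add: wt_def)

lemma wt_eq_0_iff: "x \<in> vecs_on {0..<n} \<Longrightarrow> wt n x = 0 \<longleftrightarrow> x = vzero"
  by (auto simp: wt_def vecs_on_def fun_eq_iff)

lemma wt_eq_length_nonzero:
  assumes "wt n x = n" "i < n"
  shows "x i \<noteq> 0"
proof -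
  have "{j. j < n \<and> x j \<noteq> 0} \<subseteq> {0..<n}" "card {j. j < n \<and> x j \<noteq> 0} = card {0..<n}"
    using \<open>wt n x = n\<close> by (auto simp: wt_def)
  then have "{j. j < n \<and> x j \<noteq> 0} = {0..<n}"
    by (rule card_subset_eq[OF finite_atLeastLessThan])
  then have "i \<in> {j. j < n \<and> x j \<noteq> 0}"
    using \<open>i < n\<close> by simp
  then show ?thesis
    by simp
qed

lemma support_herm_self_dual:
  assumes "herm_self_dual n C" "x \<in> C"
  shows "{j. x j \<noteq> 0} = {j. j < n \<and> x j \<noteq> 0}"
  using herm_self_dualD(1)[OF assms(1)] assms(2) by (auto simp: vecs_on_def)

lemma card_zeros: "card {j. j < n \<and> x j = 0} = n - wt n x"
proof -
  have "{j. j < n \<and> x j = 0} = {0..<n} - {j. j < n \<and> x j \<noteq> 0}"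
    by auto
  moreover have "{j. j < n \<and> x j \<noteq> 0} \<subseteq> {0..<n}"
    by auto
  ultimately show ?thesis
    unfolding wt_def by (simp add: card_Diff_subset)
qed

lemma even_wt_herm_self_dual:
  assumes "herm_self_dual n C" "x \<in> C"
  shows "even (wt n x)"
proof -
  have "hform {0..<n} x x = 0"
    using herm_self_dualD(3)[OF assms(1)] assms(2) unfolding orth_def by blast
  then show ?thesis
    by (simp add: hform_self wt_def of_nat_f4 split: if_splits)
qed

definition wt_count :: "nat \<Rightarrow> (nat \<Rightarrow> f4) set \<Rightarrow> nat \<Rightarrow> nat" where
  "wt_count n D w = card {x\<in>D. wt n x = w}"

definition wt_count_zero_at0 :: "nat \<Rightarrow> (nat \<Rightarrow> f4) set \<Rightarrow> nat \<Rightarrow> nat" where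
  "wt_count_zero_at0 n D w = card {x\<in>D. wt n x = w \<and> x 0 = 0}"

definition wt_count_nonzero_at0 :: "nat \<Rightarrow> (nat \<Rightarrow> f4) set \<Rightarrow> nat \<Rightarrow> nat" where
  "wt_count_nonzero_at0 n D w = card {x\<in>D. wt n x = w \<and> x 0 \<noteq> 0}"

lemma wt_count_split:
  assumes "finite D"
  shows "wt_count n D w = wt_count_zero_at0 n D w + wt_count_nonzero_at0 n D w"
proof -
  have "{x\<in>D. wt n x = w} = {x\<in>D. wt n x = w \<and> x 0 = 0} \<union> {x\<in>D. wt n x = w \<and> x 0 \<noteq> 0}"
    by auto
  then show ?thesis
    unfolding wt_count_def wt_count_zero_at0_def wt_count_nonzero_at0_def
    using \<open>finite D\<close> by (simp add: card_Un_disjoint disjoint_iff)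
qed

lemma wt_count_zero_at0_length: "0 < n \<Longrightarrow> wt_count_zero_at0 n D n = 0"
proof -
  assume "0 < n"
  then have "{x\<in>D. wt n x = n \<and> x 0 = 0} = {}"
    using wt_eq_length_nonzero by blast
  then show ?thesis
    unfolding wt_count_zero_at0_def by (simp only: card.empty)
qed

lemma wt_count_nonzero_at0_eq_3_mult:
  assumes "f4_subspace D"
  shows "wt_count_nonzero_at0 n D w = 3 * card {x\<in>D. wt n x = w \<and> x 0 = 1}"
proof -
  let ?U = "{c::f4. c \<noteq> 0}"
  let ?X = "{x\<in>D. wt n x = w \<and> x 0 \<noteq> 0}" and ?Y = "{x\<in>D. wt n x = w \<and> x 0 = 1}"
  have smult: "vsmult c x \<in> D" if "x \<in> D" for c x
    using assms that by (simp add: f4_subspace_def)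
  have "bij_betw (\<lambda>(c, y). vsmult c y) (?U \<times> ?Y) ?X"
  proof (rule bij_betwI[where g = "\<lambda>x. (x 0, vsmult (inverse (x 0)) x)"])
    show "(\<lambda>(c, y). vsmult c y) \<in> ?U \<times> ?Y \<rightarrow> ?X"
      using smult by (auto simp: wt_vsmult)
    show "(\<lambda>x. (x 0, vsmult (inverse (x 0)) x)) \<in> ?X \<rightarrow> ?U \<times> ?Y"
      using smult by (auto simp: wt_vsmult)
    show "(\<lambda>x. (x 0, vsmult (inverse (x 0)) x)) ((\<lambda>(c, y). vsmult c y) p) = p" if "p \<in> ?U \<times> ?Y" for p
      using that by (auto simp: fun_eq_iff)
    show "(\<lambda>(c, y). vsmult c y) (x 0, vsmult (inverse (x 0)) x) = x" if "x \<in> ?X" for x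
      using that by (simp add: fun_eq_iff)
  qed
  then show ?thesis
    unfolding wt_count_nonzero_at0_def
    by (simp add: bij_betw_same_card[symmetric] card_cartesian_product card_f4_nonzero)
qed

lemma sum_by_weight:
  assumes "finite D"
  shows "(\<Sum>x\<in>D. g (wt n x) (x 0 = 0))
       = (\<Sum>w\<le>n. wt_count_zero_at0 n D w * g w True + wt_count_nonzero_at0 n D w * g w False)"
proof -
  have "(\<Sum>x\<in>D. g (wt n x) (x 0 = 0)) = (\<Sum>w\<le>n. \<Sum>x\<in>{x\<in>D. wt n x = w}. g (wt n x) (x 0 = 0))"
    using \<open>finite D\<close> wt_le_length by (intro sum.group[symmetric]) auto
  also have "\<dots> = (\<Sum>w\<le>n. wt_count_zero_at0 n D w * g w True + wt_count_nonzero_at0 n D w * g w False)"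
  proof (rule sum.cong[OF refl])
    fix w
    have split: "{x\<in>D. wt n x = w} = {x\<in>D. wt n x = w \<and> x 0 = 0} \<union> {x\<in>D. wt n x = w \<and> x 0 \<noteq> 0}"
      by auto
    have "(\<Sum>x\<in>{x\<in>D. wt n x = w}. g (wt n x) (x 0 = 0))
        = (\<Sum>x\<in>{x\<in>D. wt n x = w \<and> x 0 = 0}. g (wt n x) (x 0 = 0))
          + (\<Sum>x\<in>{x\<in>D. wt n x = w \<and> x 0 \<noteq> 0}. g (wt n x) (x 0 = 0))"
      unfolding split using \<open>finite D\<close> by (intro sum.union_disjoint) auto
    also have "\<dots> = (\<Sum>x\<in>{x\<in>D. wt n x = w \<and> x 0 = 0}. g w True)
          + (\<Sum>x\<in>{x\<in>D. wt n x = w \<and> x 0 \<noteq> 0}. g w False)"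
      by (intro arg_cong2[where f = "(+)"] sum.cong refl) auto
    finally show "(\<Sum>x\<in>{x\<in>D. wt n x = w}. g (wt n x) (x 0 = 0))
        = wt_count_zero_at0 n D w * g w True + wt_count_nonzero_at0 n D w * g w False"
      by (simp add: wt_count_zero_at0_def wt_count_nonzero_at0_def)
  qed
  finally show ?thesis .
qed

section \<open>Binomial moments of the weight distribution\<close>

lemma binomial_moment_identity:
  assumes "herm_self_dual n C"
  shows "4 ^ k * (\<Sum>x\<in>C. card {S. A \<subseteq> S \<and> S \<subseteq> {j. j < n \<and> x j = 0} \<and> card S = k})
       = card C * (\<Sum>y\<in>C. card {S. A \<union> {j. y j \<noteq> 0} \<subseteq> S \<and> S \<subseteq> {0..<n} \<and> card S = k})"
proof -
  define F where "F = {S. A \<subseteq> S \<and> S \<subseteq> {0..<n} \<and> card S = k}"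
  have "finite F"
    unfolding F_def by (rule finite_subset[of _ "Pow {0..<n}"]) auto
  have "finite C"
    using assms by (rule finite_herm_self_dual)
  have vanishing: "{S. A \<subseteq> S \<and> S \<subseteq> {j. j < n \<and> x j = 0} \<and> card S = k} = {S\<in>F. \<forall>j\<in>S. x j = 0}"
    for x
    by (auto simp: F_def)
  have supported: "{S. A \<union> {j. y j \<noteq> 0} \<subseteq> S \<and> S \<subseteq> {0..<n} \<and> card S = k} = {S\<in>F. y \<in> vecs_on S}"
    for y
    by (auto simp: F_def vecs_on_def)
  have "4 ^ k * (\<Sum>x\<in>C. card {S. A \<subseteq> S \<and> S \<subseteq> {j. j < n \<and> x j = 0} \<and> card S = k})
      = 4 ^ k * (\<Sum>S\<in>F. card {x\<in>C. \<forall>j\<in>S. x j = 0})"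
    unfolding vanishing sum_card_swap[OF \<open>finite F\<close> \<open>finite C\<close>] ..
  also have "\<dots> = card C * (\<Sum>S\<in>F. card {y\<in>C. y \<in> vecs_on S})"
    unfolding sum_distrib_left
    by (intro sum.cong refl) (auto simp: F_def card_vanishing_on_herm_self_dual[OF assms] Int_def)
  also have "\<dots> = card C * (\<Sum>y\<in>C. card {S. A \<union> {j. y j \<noteq> 0} \<subseteq> S \<and> S \<subseteq> {0..<n} \<and> card S = k})"
    unfolding supported sum_card_swap[OF \<open>finite F\<close> \<open>finite C\<close>] ..
  finally show ?thesis .
qed

lemma moment_identity:
  assumes "herm_self_dual n C"
  shows "4 ^ k * (\<Sum>x\<in>C. (n - wt n x) choose k)
       = card C * (\<Sum>y\<in>C. if wt n y \<le> k then (n - wt n y) choose (k - wt n y) else 0)"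
proof -
  have vanishing: "card {S. {} \<subseteq> S \<and> S \<subseteq> {j. j < n \<and> x j = 0} \<and> card S = k}
      = (n - wt n x) choose k" for x
    by (subst card_supersets) (simp_all add: card_zeros)
  have supported: "card {S. {} \<union> {j. y j \<noteq> 0} \<subseteq> S \<and> S \<subseteq> {0..<n} \<and> card S = k}
      = (if wt n y \<le> k then (n - wt n y) choose (k - wt n y) else 0)" if "y \<in> C" for y
    by (subst card_supersets) (auto simp: support_herm_self_dual[OF assms that] wt_def)
  have "4 ^ k * (\<Sum>x\<in>C. (n - wt n x) choose k)
      = 4 ^ k * (\<Sum>x\<in>C. card {S. {} \<subseteq> S \<and> S \<subseteq> {j. j < n \<and> x j = 0} \<and> card S = k})"
    by (simp only: vanishing)
  also have "\<dots> = card C * (\<Sum>y\<in>C. card {S. {} \<union> {j. y j \<noteq> 0} \<subseteq> S \<and> S \<subseteq> {0..<n} \<and> card S = k})"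
    by (rule binomial_moment_identity[OF assms])
  also have "\<dots> = card C * (\<Sum>y\<in>C. if wt n y \<le> k then (n - wt n y) choose (k - wt n y) else 0)"
    using supported by (intro arg_cong[where f = "\<lambda>t. card C * t"] sum.cong) simp_all
  finally show ?thesis .
qed

lemma moment_identity_at0:
  assumes "herm_self_dual (Suc m) C"
  shows "4 ^ Suc s * (\<Sum>x\<in>C. if x 0 = 0 then (m - wt (Suc m) x) choose s else 0)
       = card C * (\<Sum>y\<in>C. if y 0 = 0
            then (if wt (Suc m) y \<le> s then (m - wt (Suc m) y) choose (s - wt (Suc m) y) else 0)
            else (if wt (Suc m) y \<le> Suc s then (Suc m - wt (Suc m) y) choose (Suc s - wt (Suc m) y) else 0))"
    (is "_ * ?lhs = _ * ?rhs")
proof -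
  have vanishing: "card {S. {0} \<subseteq> S \<and> S \<subseteq> {j. j < Suc m \<and> x j = 0} \<and> card S = Suc s}
      = (if x 0 = 0 then (m - wt (Suc m) x) choose s else 0)" for x
    by (subst card_supersets) (simp_all add: card_zeros)
  have supported: "card {S. {0} \<union> {j. y j \<noteq> 0} \<subseteq> S \<and> S \<subseteq> {0..<Suc m} \<and> card S = Suc s}
      = (if y 0 = 0
          then (if wt (Suc m) y \<le> s then (m - wt (Suc m) y) choose (s - wt (Suc m) y) else 0)
          else (if wt (Suc m) y \<le> Suc s then (Suc m - wt (Suc m) y) choose (Suc s - wt (Suc m) y) else 0))"
    if "y \<in> C" for y
  proof -
    have support: "{j. y j \<noteq> 0} = {j. j < Suc m \<and> y j \<noteq> 0}"
      by (rule support_herm_self_dual[OF assms that])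
    have "card ({0} \<union> {j. y j \<noteq> 0}) = (if y 0 = 0 then Suc (wt (Suc m) y) else wt (Suc m) y)"
      by (cases "y 0 = 0") (simp_all add: support wt_def insert_absorb)
    then show ?thesis
      by (subst card_supersets) (auto simp: support)
  qed
  have "4 ^ Suc s * ?lhs
      = 4 ^ Suc s * (\<Sum>x\<in>C. card {S. {0} \<subseteq> S \<and> S \<subseteq> {j. j < Suc m \<and> x j = 0} \<and> card S = Suc s})"
    by (simp only: vanishing)
  also have "\<dots> = card C * (\<Sum>y\<in>C. card {S. {0} \<union> {j. y j \<noteq> 0} \<subseteq> S \<and> S \<subseteq> {0..<Suc m} \<and> card S = Suc s})"
    by (rule binomial_moment_identity[OF assms])
  also have "\<dots> = card C * ?rhs"
    using supported by (intro arg_cong[where f = "\<lambda>t. card C * t"] sum.cong) simp_all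
  finally show ?thesis .
qed

section \<open>Near-extremal codes of length 24\<close>

lemma near_extremal_herm_self_dual: "near_extremal_24 D \<Longrightarrow> herm_self_dual 24 D"
  by (simp add: near_extremal_24_def)

lemma finite_near_extremal: "near_extremal_24 D \<Longrightarrow> finite D"
  by (rule finite_herm_self_dual[OF near_extremal_herm_self_dual])

lemma even_between_8_24:
  "8 \<le> w \<Longrightarrow> w \<le> 24 \<Longrightarrow> even w \<Longrightarrow> w \<in> {8, 10, 12, 14, 16, 18, 20, 22, 24::nat}"
  unfolding insert_iff empty_iff by presburger

lemma near_extremal_wt_mem:
  assumes "near_extremal_24 D" "x \<in> D"
  shows "wt 24 x \<in> {0, 8, 10, 12, 14, 16, 18, 20, 22, 24}"
proof (cases "x = vzero")
  case True
  then show ?thesis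
    by (simp add: wt_def)
next
  case False
  then have "8 \<le> wt 24 x" "even (wt 24 x)"
    using assms even_wt_herm_self_dual[OF near_extremal_herm_self_dual]
    by (auto simp: near_extremal_24_def min_weight_def)
  then show ?thesis
    using even_between_8_24[OF _ wt_le_length] by blast
qed

lemma near_extremal_wt_count_0:
  assumes "near_extremal_24 D"
  shows "wt_count_zero_at0 24 D 0 = 1" "wt_count_nonzero_at0 24 D 0 = 0"
proof -
  have "D \<subseteq> vecs_on {0..<24}" "vzero \<in> D"
    using herm_self_dualD(1,2)[OF near_extremal_herm_self_dual[OF assms]]
    by (auto simp: f4_subspace_def)
  then have wt_0: "wt 24 x = 0 \<longleftrightarrow> x = vzero" if "x \<in> D" for x
    using that by (intro wt_eq_0_iff) blast
  have "{x\<in>D. wt 24 x = 0 \<and> x 0 = 0} = {vzero}"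
    using \<open>vzero \<in> D\<close> by (auto simp: wt_0)
  then show "wt_count_zero_at0 24 D 0 = 1"
    by (simp add: wt_count_zero_at0_def)
  have "\<not> (wt 24 x = 0 \<and> x 0 \<noteq> 0)" if "x \<in> D" for x
    using wt_0[OF that] by auto
  then have "{x\<in>D. wt 24 x = 0 \<and> x 0 \<noteq> 0} = {}"
    by blast
  then show "wt_count_nonzero_at0 24 D 0 = 0"
    unfolding wt_count_nonzero_at0_def by (simp only: card.empty)
qed

lemma sum_near_extremal:
  assumes "near_extremal_24 D"
  shows "(\<Sum>x\<in>D. g (wt 24 x) (x 0 = 0)) = g 0 True +
    (\<Sum>w\<in>{8, 10, 12, 14, 16, 18, 20, 22, 24}.
       wt_count_zero_at0 24 D w * g w True + wt_count_nonzero_at0 24 D w * g w False)"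
proof -
  let ?f = "\<lambda>w. wt_count_zero_at0 24 D w * g w True + wt_count_nonzero_at0 24 D w * g w False"
  have "?f w = 0" if "w \<notin> {0, 8, 10, 12, 14, 16, 18, 20, 22, 24}" for w
  proof -
    have "{x\<in>D. wt 24 x = w \<and> x 0 = 0} = {}" "{x\<in>D. wt 24 x = w \<and> x 0 \<noteq> 0} = {}"
      using that near_extremal_wt_mem[OF assms] by blast+
    then show ?thesis
      unfolding wt_count_zero_at0_def wt_count_nonzero_at0_def by (simp only: card.empty mult_0 add_0)
  qed
  then have "(\<Sum>w\<le>24. ?f w) = (\<Sum>w\<in>{0, 8, 10, 12, 14, 16, 18, 20, 22, 24}. ?f w)"
    by (intro sum.mono_neutral_right) auto
  then show ?thesis
    using sum_by_weight[OF finite_near_extremal[OF assms]] near_extremal_wt_count_0[OF assms]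
    by simp
qed

lemma moments_near_extremal:
  assumes "near_extremal_24 D"
  shows "4 ^ k * ((24 choose k) + (\<Sum>w\<in>{8, 10, 12, 14, 16, 18, 20, 22, 24}.
            (wt_count_zero_at0 24 D w + wt_count_nonzero_at0 24 D w) * ((24 - w) choose k)))
       = 4 ^ 12 * ((24 choose k) + (\<Sum>w\<in>{8, 10, 12, 14, 16, 18, 20, 22, 24}.
            (wt_count_zero_at0 24 D w + wt_count_nonzero_at0 24 D w)
              * (if w \<le> k then (24 - w) choose (k - w) else 0)))"
proof -
  have "herm_self_dual 24 D"
    using assms by (rule near_extremal_herm_self_dual)
  then have "4 ^ k * (\<Sum>x\<in>D. (24 - wt 24 x) choose k)
      = 4 ^ 12 * (\<Sum>y\<in>D. if wt 24 y \<le> k then (24 - wt 24 y) choose (k - wt 24 y) else 0)"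
    using moment_identity[of 24 D k] card_herm_self_dual[of 24 D] by simp
  then show ?thesis
    unfolding sum_near_extremal[OF assms, of "\<lambda>w _. (24 - w) choose k"]
      sum_near_extremal[OF assms, of "\<lambda>w _. if w \<le> k then (24 - w) choose (k - w) else 0"]
    by (simp add: distrib_right)
qed

lemma moments_at0_near_extremal:
  assumes "near_extremal_24 D"
  shows "4 ^ Suc s * ((23 choose s) + (\<Sum>w\<in>{8, 10, 12, 14, 16, 18, 20, 22, 24}.
            wt_count_zero_at0 24 D w * ((23 - w) choose s)))
       = 4 ^ 12 * ((23 choose s) + (\<Sum>w\<in>{8, 10, 12, 14, 16, 18, 20, 22, 24}.
            wt_count_zero_at0 24 D w * (if w \<le> s then (23 - w) choose (s - w) else 0)
            + wt_count_nonzero_at0 24 D w * (if w \<le> Suc s then (24 - w) choose (Suc s - w) else 0)))"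
proof -
  have "herm_self_dual 24 D"
    using assms by (rule near_extremal_herm_self_dual)
  then have "4 ^ Suc s * (\<Sum>x\<in>D. if x 0 = 0 then (23 - wt 24 x) choose s else 0)
      = 4 ^ 12 * (\<Sum>y\<in>D. if y 0 = 0
            then (if wt 24 y \<le> s then (23 - wt 24 y) choose (s - wt 24 y) else 0)
            else (if wt 24 y \<le> Suc s then (24 - wt 24 y) choose (Suc s - wt 24 y) else 0))"
  proof -
    have "Suc 23 = (24::nat)" "card D = 4 ^ 12"
      using card_herm_self_dual[OF \<open>herm_self_dual 24 D\<close>] by simp_all
    then show ?thesis
      using moment_identity_at0[of 23 D s] \<open>herm_self_dual 24 D\<close> by (simp only:)
  qed
  then show ?thesis
    unfolding sum_near_extremal[OF assms, of "\<lambda>w b. if b then (23 - w) choose s else 0"]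
      sum_near_extremal[OF assms, of "\<lambda>w b. if b
            then (if w \<le> s then (23 - w) choose (s - w) else 0)
            else (if w \<le> Suc s then (24 - w) choose (Suc s - w) else 0)"]
    by simp
qed

\<comment> \<open>\<open>simp\<close> evaluates the binomial coefficients, and its linear arithmetic then solves the
  equations for the counts; the same holds for the next lemma.\<close>
lemma near_extremal_wt_count_8_zero_at0:
  assumes "near_extremal_24 D"
  shows "wt_count_zero_at0 24 D 8 = 2 * wt_count_nonzero_at0 24 D 8"
  using moments_at0_near_extremal[OF assms, of 0]
    moments_at0_near_extremal[OF assms, of 1]
    moments_at0_near_extremal[OF assms, of 2]
    moments_at0_near_extremal[OF assms, of 3]
    moments_at0_near_extremal[OF assms, of 4]
    moments_at0_near_extremal[OF assms, of 5]
    moments_at0_near_extremal[OF assms, of 6]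
    moments_at0_near_extremal[OF assms, of 7]
    wt_count_zero_at0_length[of 24 D]
  by (simp add: binomial_eq_div binomial_eq_0)

lemma near_extremal_wt_count_8_10:
  assumes "near_extremal_24 D"
  shows "wt_count 24 D 10 + 8 * wt_count 24 D 8 = 18216"
  using moments_near_extremal[OF assms, of 1]
    moments_near_extremal[OF assms, of 2]
    moments_near_extremal[OF assms, of 3]
    moments_near_extremal[OF assms, of 4]
    moments_near_extremal[OF assms, of 5]
    moments_near_extremal[OF assms, of 6]
    moments_near_extremal[OF assms, of 7]
  by (simp add: wt_count_split[OF finite_near_extremal[OF assms]] binomial_eq_div binomial_eq_0)

theorem fact5p1:
  assumes "near_extremal_24 D"
  shows "\<exists>\<beta>::int. int (card {x \<in> D. wt 24 x = 8}) = 9 * \<beta> \<and> 1 \<le> \<beta> \<and> \<beta> \<le> 253"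
proof -
  define \<beta> where "\<beta> = card {x\<in>D. wt 24 x = 8 \<and> x 0 = 1}"
  have "f4_subspace D"
    using herm_self_dualD(2)[OF near_extremal_herm_self_dual[OF assms]] .
  then have "wt_count_nonzero_at0 24 D 8 = 3 * \<beta>"
    unfolding \<beta>_def by (rule wt_count_nonzero_at0_eq_3_mult)
  then have count: "wt_count 24 D 8 = 9 * \<beta>"
    using wt_count_split[OF finite_near_extremal[OF assms]] near_extremal_wt_count_8_zero_at0[OF assms]
    by simp
  obtain x where "x \<in> D" "wt 24 x = 8"
    using assms by (auto simp: near_extremal_24_def min_weight_def)
  then have "wt_count 24 D 8 \<noteq> 0"
    using finite_near_extremal[OF assms] by (auto simp: wt_count_def)
  moreover have "8 * wt_count 24 D 8 \<le> 18216"
    using near_extremal_wt_count_8_10[OF assms] by linarith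
  ultimately show ?thesis
    using count by (intro exI[of _ "int \<beta>"]) (simp add: wt_count_def)
qed

end
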